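(* Suppose $q_1,q_2,q\in\mathbb{Z}^+$ with $q\to+\infty$ and $\max\{q_1,q_2\}=o(q^2)$. Then $$\left|\{(a,b)\in\mathbb{Z}^2\cap([q_1,q_1+q]\times[q_2,q_2+q]):\gcd(a,b)=1\}\right|=q^2\left(\frac{6}{\pi^2}+o_q(1)\right).$$ Equivalently, if one chooses independently a uniform integer in $[q_1,q_1+q]$ and a uniform integer in $[q_2,q_2+q]$, the probability that they are relatively prime tends to $\frac6{\pi^2}$ as $q\to+\infty$. *)

theory Defs
  imports Complex_Main
begin

end

theory Submission
  imports Defs "HOL-Computational_Algebra.Squarefree" "HOL-Analysis.Gamma_Function"
begin

(* Moebius inversion writes the indicator of coprimality as the sum of mu d over the common
   divisors d of a and b; all of them are at most M = max q1 q2 + q. An interval of q + 1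
   consecutive integers contains (q + 1) / d + O(1) multiples of d, so the number of coprime pairs
   is (q + 1)^2 * (sum of mu d / d^2 over d <= M) + O(q sqrt M + M), using that the harmonic sum
   up to M is at most 2 sqrt M. The truncated Dirichlet product of mu d / d^2 with the partial
   sums of zeta(2) is exactly 1, and zeta(2) minus its N-th partial sum is at most 1 / N; hence
   the truncated sum of mu d / d^2 is 6 / pi^2 + O(1 / sqrt M). Since q <= M = o(q^2), all error
   terms are o(q^2). *)

definition moebius :: "nat \<Rightarrow> int" where
  "moebius n = (if squarefree n then (-1) ^ card (prime_factors n) else 0)"

lemma abs_moebius_le_1: "\<bar>real_of_int (moebius n)\<bar> \<le> 1"
  by (simp add: moebius_def)

lemma prod_prime_factors_squarefree:
  fixes n :: nat
  assumes "squarefree n"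
  shows "\<Prod>(prime_factors n) = n"
proof -
  have "n \<noteq> 0" using assms by (intro notI) simp
  then have "n = (\<Prod>p \<in> prime_factors n. p ^ multiplicity p n)"
    by (simp add: prod_prime_factors)
  also have "\<dots> = (\<Prod>p \<in> prime_factors n. p)"
    using assms \<open>n \<noteq> 0\<close> by (intro prod.cong refl) (simp add: squarefree_factorial_semiring')
  finally show ?thesis by simp
qed

lemma prime_factors_prod_primes:
  fixes S :: "nat set"
  assumes "finite S" "\<And>p. p \<in> S \<Longrightarrow> prime p"
  shows "prime_factors (\<Prod>S) = S"
proof -
  have "0 \<notin> S" using assms(2) by (metis not_prime_0)
  then have "prime_factors (\<Prod>S) = \<Union>((prime_factors \<circ> (\<lambda>x. x)) ` S)"
    using assms(1) by (intro prime_factors_prod) auto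
  also have "\<dots> = S" using assms by (auto simp: prime_prime_factors)
  finally show ?thesis .
qed

lemma squarefree_prod_primes:
  fixes S :: "nat set"
  assumes "finite S" "\<And>p. p \<in> S \<Longrightarrow> prime p"
  shows "squarefree (\<Prod>S)"
  using assms by (intro squarefree_prod_coprime) (auto intro: squarefree_prime primes_coprime)

lemma bij_betw_Prod_squarefree_divisors:
  fixes n :: nat
  assumes "n > 0"
  shows "bij_betw Prod (Pow (prime_factors n)) {d. d dvd n \<and> squarefree d}"
proof (rule bij_betw_byWitness[where f' = prime_factors])
  have "(\<Prod>p\<in>prime_factors n. p) dvd (\<Prod>p\<in>prime_factors n. p ^ multiplicity p n)"
    using assms by (intro prod_dvd_prod) (auto simp: prime_factors_multiplicity)
  then have "\<Prod>(prime_factors n) dvd n"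
    using assms by (simp add: prod_prime_factors)
  then have "\<Prod>S dvd n" if "S \<subseteq> prime_factors n" for S
    using that by (meson dvd_trans finite_set_mset prod_dvd_prod_subset)
  then show "Prod ` Pow (prime_factors n) \<subseteq> {d. d dvd n \<and> squarefree d}"
    by (auto intro!: squarefree_prod_primes intro: finite_subset)
  show "\<forall>S\<in>Pow (prime_factors n). prime_factors (\<Prod>S) = S"
    by (auto intro!: prime_factors_prod_primes intro: finite_subset)
  show "\<forall>d\<in>{d. d dvd n \<and> squarefree d}. \<Prod>(prime_factors d) = d"
    by (auto intro: prod_prime_factors_squarefree)
  show "prime_factors ` {d. d dvd n \<and> squarefree d} \<subseteq> Pow (prime_factors n)"
    using assms by (auto simp: in_prime_factors_iff intro: dvd_trans)
qed

lemma sum_Pow_neg_one_pow_card: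
  assumes "finite A" "A \<noteq> {}"
  shows "(\<Sum>S\<in>Pow A. (-1::int) ^ card S) = 0"
proof -
  have "(\<Prod>x\<in>A. (1::int) - 1) = (\<Sum>S\<in>Pow A. (-1) ^ card S)"
    using prod_diff_conv_sum[OF assms(1), of "\<lambda>_. 1" "\<lambda>_. 1"] by simp
  moreover have "(\<Prod>x\<in>A. (1::int) - 1) = 0" using assms by (simp add: card_gt_0_iff)
  ultimately show ?thesis by simp
qed

lemma sum_moebius_divisors:
  fixes n :: nat
  assumes "n > 0"
  shows "(\<Sum>d | d dvd n. moebius d) = (if n = 1 then 1 else 0)"
proof -
  have "(\<Sum>d | d dvd n. moebius d) = (\<Sum>d | d dvd n \<and> squarefree d. (-1) ^ card (prime_factors d))"
    using assms by (intro sum.mono_neutral_cong_right) (auto simp: moebius_def)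
  also have "\<dots> = (\<Sum>S\<in>Pow (prime_factors n). (-1) ^ card (prime_factors (\<Prod>S)))"
    by (rule sum.reindex_bij_betw[OF bij_betw_Prod_squarefree_divisors[OF assms], symmetric])
  also have "\<dots> = (\<Sum>S\<in>Pow (prime_factors n). (-1) ^ card S)"
    by (intro sum.cong refl) (subst prime_factors_prod_primes; auto intro: finite_subset)
  also have "\<dots> = (if n = 1 then 1 else 0)"
  proof (cases "n = 1")
    case False
    then have "prime_factors n \<noteq> {}"
      using assms by (metis prime_factor_nat in_prime_factors_iff not_gr0 empty_iff)
    then show ?thesis using False by (simp add: sum_Pow_neg_one_pow_card)
  qed simp
  finally show ?thesis .
qed

definition zeta2_partial :: "nat \<Rightarrow> real" where
  "zeta2_partial n = (\<Sum>m=1..n. 1 / (real m)^2)"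

lemma zeta2_partial_tendsto: "zeta2_partial \<longlonglongrightarrow> pi^2 / 6"
proof -
  have "(\<lambda>n. \<Sum>m<n. 1 / (real m + 1)^2) \<longlonglongrightarrow> pi^2 / 6"
    using inverse_squares_sums by (simp add: sums_def add.commute)
  moreover have "(\<Sum>m<n. 1 / (real m + 1)^2) = zeta2_partial n" for n
    unfolding zeta2_partial_def by (simp add: sum.atLeast1_atMost_eq add.commute)
  ultimately show ?thesis by simp
qed

lemma incseq_zeta2_partial: "incseq zeta2_partial"
  unfolding incseq_def zeta2_partial_def by (auto intro: sum_mono2)

lemma zeta2_partial_le: "zeta2_partial n \<le> pi^2 / 6"
  by (rule incseq_le[OF incseq_zeta2_partial zeta2_partial_tendsto])

lemma zeta2_partial_diff_le:
  assumes "1 \<le> m" "m \<le> n"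
  shows "zeta2_partial n - zeta2_partial m \<le> 1 / m - 1 / n"
  using assms(2)
proof (induction n rule: dec_induct)
  case (step n)
  have "real n \<ge> 1" using assms step by simp
  have "real n * (real n + 1) \<le> (real (Suc n))^2"
    by (simp add: power2_eq_square algebra_simps)
  then have "1 / (real (Suc n))^2 \<le> 1 / (real n * (real n + 1))"
    using \<open>real n \<ge> 1\<close> by (intro divide_left_mono) auto
  also have "\<dots> = 1 / real n - 1 / real (Suc n)"
    using \<open>real n \<ge> 1\<close> by (simp add: field_simps)
  finally show ?case
    using step.IH by (simp add: zeta2_partial_def)
qed simp

lemma zeta2_tail_le:
  assumes "1 \<le> m"
  shows "pi^2 / 6 - zeta2_partial m \<le> 1 / m"
proof -
  have "zeta2_partial n \<le> zeta2_partial m + 1 / m" if "m \<le> n" for n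
  proof -
    have "0 \<le> 1 / real n" by simp
    then show ?thesis using zeta2_partial_diff_le[OF assms that] by linarith
  qed
  then have "pi^2 / 6 \<le> zeta2_partial m + 1 / m"
    by (intro LIMSEQ_le_const2[OF zeta2_partial_tendsto]) auto
  then show ?thesis by simp
qed

lemma harm_le_two_sqrt: "(harm n :: real) \<le> 2 * sqrt n"
proof (induction n)
  case (Suc n)
  define a b where "a = sqrt (Suc n)" and "b = sqrt n"
  have "a \<ge> 1" "0 \<le> b" "b \<le> a" "a^2 - b^2 = 1"
    by (simp_all add: a_def b_def)
  moreover have "a \<le> a^2"
    using \<open>a \<ge> 1\<close> by (simp add: power2_eq_square)
  ultimately have "1 / a^2 \<le> 2 / (a + b)"
    by (simp add: divide_simps)
  also have "2 / (a + b) = 2 * a - 2 * b"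
    using \<open>a^2 - b^2 = 1\<close> \<open>a \<ge> 1\<close> \<open>0 \<le> b\<close> by (simp add: field_simps power2_eq_square)
  finally have "inverse (real (Suc n)) \<le> 2 * a - 2 * b"
    by (simp add: a_def divide_inverse)
  then show ?case
    using Suc.IH by (simp add: harm_Suc a_def b_def)
qed (simp add: harm_def)

lemma sum_multiples_atLeastAtMost:
  fixes d D :: nat
  assumes "d > 0"
  shows "(\<Sum>m=1..D div d. f (d * m)) = (\<Sum>n | n \<in> {1..D} \<and> d dvd n. f n)"
proof (rule sum.reindex_bij_witness[where i = "\<lambda>n. n div d" and j = "\<lambda>m. d * m"])
  fix m assume "m \<in> {1..D div d}"
  then show "d * m \<in> {n. n \<in> {1..D} \<and> d dvd n}"
    using assms by (auto simp: less_eq_div_iff_mult_less_eq mult.commute)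
next
  fix n assume "n \<in> {n. n \<in> {1..D} \<and> d dvd n}"
  then show "n div d \<in> {1..D div d}"
    using assms by (auto simp: div_le_mono dvd_imp_le div_greater_zero_iff)
qed (use assms in auto)

lemma moebius_zeta2_partial_convolution:
  assumes "D \<ge> 1"
  shows "(\<Sum>d=1..D. moebius d / (real d)^2 * zeta2_partial (D div d)) = 1"
proof -
  have "(\<Sum>d=1..D. moebius d / (real d)^2 * zeta2_partial (D div d))
      = (\<Sum>d=1..D. \<Sum>n | n \<in> {1..D} \<and> d dvd n. moebius d / (real n)^2)"
  proof (intro sum.cong refl)
    fix d assume "d \<in> {1..D}"
    then have "moebius d / (real d)^2 * zeta2_partial (D div d) = (\<Sum>m=1..D div d. moebius d / (real (d * m))^2)"
      by (simp add: zeta2_partial_def sum_distrib_left power_mult_distrib)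
    also have "\<dots> = (\<Sum>n | n \<in> {1..D} \<and> d dvd n. moebius d / (real n)^2)"
      using \<open>d \<in> {1..D}\<close> by (intro sum_multiples_atLeastAtMost) simp
    finally show "moebius d / (real d)^2 * zeta2_partial (D div d) = \<dots>" .
  qed
  also have "\<dots> = (\<Sum>n=1..D. \<Sum>d | d \<in> {1..D} \<and> d dvd n. moebius d / (real n)^2)"
    by (rule sum.swap_restrict) auto
  also have "\<dots> = (\<Sum>n=1..D. (\<Sum>d | d dvd n. moebius d) / (real n)^2)"
  proof (intro sum.cong refl)
    fix n assume "n \<in> {1..D}"
    then have "{d. d \<in> {1..D} \<and> d dvd n} = {d. d dvd n}"
      by (auto dest: dvd_imp_le intro: Nat.gr0I)
    then show "(\<Sum>d | d \<in> {1..D} \<and> d dvd n. moebius d / (real n)^2) = (\<Sum>d | d dvd n. moebius d) / (real n)^2"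
      by (simp add: sum_divide_distrib)
  qed
  also have "\<dots> = (\<Sum>n=1..D. if n = 1 then 1 else 0)"
    by (intro sum.cong refl) (simp add: sum_moebius_divisors)
  also have "\<dots> = 1"
    using assms by simp
  finally show ?thesis .
qed

lemma inverse_div_le:
  fixes d D :: nat
  assumes "1 \<le> d" "d \<le> D"
  shows "1 / real (D div d) \<le> 2 * real d / real D"
proof -
  have "D div d \<ge> 1" using assms by (simp add: Suc_le_eq div_greater_zero_iff)
  have "D < d * (D div d) + d"
    using assms by (metis add_less_cancel_left div_mult_mod_eq mod_less_divisor mult.commute not_one_le_zero not_gr0)
  also have "\<dots> \<le> 2 * d * (D div d)"
    using \<open>D div d \<ge> 1\<close> by simp
  finally have "real D \<le> 2 * real d * real (D div d)"
    by (metis less_imp_le of_nat_le_iff of_nat_mult of_nat_numeral)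
  then show ?thesis using \<open>D div d \<ge> 1\<close> assms by (simp add: field_simps)
qed

lemma moebius_inverse_squares_error:
  assumes "D \<ge> 1"
  shows "\<bar>(\<Sum>d=1..D. moebius d / (real d)^2) - 6 / pi^2\<bar> \<le> 4 / sqrt D"
proof -
  define S Z where "S = (\<Sum>d=1..D. moebius d / (real d)^2)" and "Z = pi^2 / 6"
  have "Z \<ge> 1"
    using mult_strict_mono[OF pi_gt3 pi_gt3] by (simp add: Z_def power2_eq_square)
  have "S * Z - 1 = (\<Sum>d=1..D. moebius d / (real d)^2 * (Z - zeta2_partial (D div d)))"
    using moebius_zeta2_partial_convolution[OF assms]
    by (simp add: S_def sum_distrib_right right_diff_distrib sum_subtractf)
  also have "\<bar>\<dots>\<bar> \<le> (\<Sum>d=1..D. 2 / D * (1 / d))"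
  proof (rule order_trans[OF sum_abs sum_mono])
    fix d assume "d \<in> {1..D}"
    have nonneg: "0 \<le> Z - zeta2_partial (D div d)"
      using zeta2_partial_le by (simp add: Z_def)
    have tail: "Z - zeta2_partial (D div d) \<le> 2 * d / D"
      using zeta2_tail_le[of "D div d"] inverse_div_le[of d D] \<open>d \<in> {1..D}\<close>
      by (simp add: Z_def Suc_le_eq div_greater_zero_iff)
    have "\<bar>moebius d / (real d)^2 * (Z - zeta2_partial (D div d))\<bar>
        = \<bar>real_of_int (moebius d)\<bar> * (Z - zeta2_partial (D div d)) / (real d)^2"
      using nonneg by (simp add: abs_mult)
    also have "\<dots> \<le> 1 * (2 * d / D) / (real d)^2"
      using abs_moebius_le_1[of d] nonneg tail by (intro divide_right_mono mult_mono) auto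
    also have "\<dots> = 2 / D * (1 / d)"
      using \<open>d \<in> {1..D}\<close> by (simp add: field_simps power2_eq_square)
    finally show "\<bar>moebius d / (real d)^2 * (Z - zeta2_partial (D div d))\<bar> \<le> 2 / D * (1 / d)" .
  qed
  also have "\<dots> = 2 / D * harm D"
    by (simp add: harm_def sum_distrib_left divide_inverse)
  also have "\<dots> \<le> 2 / D * (2 * sqrt D)"
    by (intro mult_left_mono harm_le_two_sqrt) auto
  also have "\<dots> = 4 / sqrt D"
    using assms by (simp add: field_simps flip: real_sqrt_mult)
  finally have "\<bar>S * Z - 1\<bar> \<le> 4 / sqrt D" .
  moreover have "\<bar>S - 6 / pi^2\<bar> = \<bar>S * Z - 1\<bar> / Z"
    using \<open>Z \<ge> 1\<close> by (simp add: Z_def field_simps)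
  moreover have "\<bar>S * Z - 1\<bar> / Z \<le> \<bar>S * Z - 1\<bar>"
    using \<open>Z \<ge> 1\<close> by (simp add: divide_le_eq mult_le_cancel_left1)
  ultimately show ?thesis
    unfolding S_def by linarith
qed

lemma int_le_div_iff_mult_le:
  fixes k x d :: int
  assumes "d > 0"
  shows "k \<le> x div d \<longleftrightarrow> d * k \<le> x"
proof -
  have "k \<le> x div d \<longleftrightarrow> k \<le> \<lfloor>real_of_int x / real_of_int d\<rfloor>"
    by (simp only: floor_divide_of_int_eq)
  also have "\<dots> \<longleftrightarrow> d * k \<le> x"
    using assms by (simp add: le_floor_iff pos_le_divide_eq mult.commute flip: of_int_mult)
  finally show ?thesis .
qed

lemma card_multiples_in_interval:
  fixes d L U :: int
  assumes "d > 0" "L \<le> U + 1"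
  shows "int (card {a \<in> {L..U}. d dvd a}) = U div d - (L - 1) div d"
proof -
  have "{a \<in> {L..U}. d dvd a} = (\<lambda>k. d * k) ` {(L - 1) div d + 1 .. U div d}"
  proof (intro set_eqI iffI)
    fix a assume "a \<in> {a \<in> {L..U}. d dvd a}"
    then obtain k where "a = d * k" "L \<le> d * k" "d * k \<le> U" by auto
    moreover from this have "\<not> k \<le> (L - 1) div d" "k \<le> U div d"
      using assms(1) by (simp_all add: int_le_div_iff_mult_le)
    ultimately show "a \<in> (\<lambda>k. d * k) ` {(L - 1) div d + 1 .. U div d}" by auto
  next
    fix a assume "a \<in> (\<lambda>k. d * k) ` {(L - 1) div d + 1 .. U div d}"
    then obtain k where "k \<in> {(L - 1) div d + 1 .. U div d}" "a = d * k" by (rule imageE)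
    then show "a \<in> {a \<in> {L..U}. d dvd a}"
      using int_le_div_iff_mult_le[OF assms(1), of k "L - 1"] int_le_div_iff_mult_le[OF assms(1), of k U]
      by auto
  qed
  then have "card {a \<in> {L..U}. d dvd a} = card {(L - 1) div d + 1 .. U div d}"
    using assms(1) by (simp add: card_image inj_on_def)
  moreover have "(L - 1) div d \<le> U div d"
    using assms by (intro zdiv_mono1) auto
  ultimately show ?thesis
    by simp
qed

lemma card_multiples_in_interval_approx:
  fixes d L U :: int
  assumes "d > 0" "L \<le> U + 1"
  shows "\<bar>real (card {a \<in> {L..U}. d dvd a}) - real_of_int (U - L + 1) / real_of_int d\<bar> \<le> 1"
proof -
  have div_approx: "x / d - 1 < real_of_int (x div d) \<and> real_of_int (x div d) \<le> x / d" for x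
    using real_of_int_floor_gt_diff_one[of "x / d"] of_int_floor_le[of "x / d"]
    by (simp add: floor_divide_of_int_eq)
  have "real (card {a \<in> {L..U}. d dvd a}) = real_of_int (U div d) - real_of_int ((L - 1) div d)"
    using card_multiples_in_interval[OF assms] by (metis of_int_diff of_int_of_nat_eq)
  moreover have "real_of_int (U - L + 1) / real_of_int d = U / d - (L - 1) / d"
    using assms(1) by (simp add: field_simps)
  ultimately show ?thesis
    using div_approx[of U] div_approx[of "L - 1"] by linarith
qed

lemma sum_moebius_common_divisors:
  fixes a b :: int and M :: nat
  assumes "0 < a" "a \<le> int M"
  shows "(\<Sum>d | d \<in> {1..M} \<and> int d dvd a \<and> int d dvd b. moebius d) = (if coprime a b then 1 else 0)"
proof -
  define g where "g = nat (gcd a b)"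
  have "0 < gcd a b" "gcd a b \<le> a"
    using assms(1) by (auto intro: zdvd_imp_le)
  then have "g > 0" "g \<le> M"
    using assms(2) by (simp_all add: g_def)
  have "int d dvd a \<and> int d dvd b \<longleftrightarrow> d dvd g" for d
    using \<open>0 < gcd a b\<close> by (simp add: g_def flip: int_dvd_int_iff)
  then have "{d. d \<in> {1..M} \<and> int d dvd a \<and> int d dvd b} = {d. d dvd g}"
    using \<open>g > 0\<close> \<open>g \<le> M\<close> by (auto dest: dvd_imp_le intro: Nat.gr0I)
  moreover have "g = 1 \<longleftrightarrow> coprime a b"
    using \<open>0 < gcd a b\<close> by (auto simp: g_def coprime_iff_gcd_eq_1)
  ultimately show ?thesis
    using sum_moebius_divisors[OF \<open>g > 0\<close>] by simp
qed

lemma card_coprime_pairs_eq_sum_moebius: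
  fixes X Y :: "int set" and M :: nat
  assumes "X \<subseteq> {1..int M}" "finite Y"
  shows "int (card {(a, b). a \<in> X \<and> b \<in> Y \<and> coprime a b})
       = (\<Sum>d=1..M. moebius d * int (card {a \<in> X. int d dvd a} * card {b \<in> Y. int d dvd b}))"
proof -
  have "finite (X \<times> Y)"
    using assms finite_subset by blast
  have "{(a, b). a \<in> X \<and> b \<in> Y \<and> coprime a b} = {p \<in> X \<times> Y. coprime (fst p) (snd p)}"
    by auto
  then have "int (card {(a, b). a \<in> X \<and> b \<in> Y \<and> coprime a b})
      = (\<Sum>p\<in>{p \<in> X \<times> Y. coprime (fst p) (snd p)}. 1)"
    by simp
  also have "\<dots> = (\<Sum>p\<in>X \<times> Y. if coprime (fst p) (snd p) then 1 else 0)"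
    using \<open>finite (X \<times> Y)\<close> by (rule sum.inter_filter)
  also have "\<dots> = (\<Sum>p\<in>X \<times> Y. \<Sum>d | d \<in> {1..M} \<and> int d dvd fst p \<and> int d dvd snd p. moebius d)"
    using assms(1) by (intro sum.cong refl sum_moebius_common_divisors[symmetric]) auto
  also have "\<dots> = (\<Sum>d=1..M. \<Sum>p | p \<in> X \<times> Y \<and> int d dvd fst p \<and> int d dvd snd p. moebius d)"
    using \<open>finite (X \<times> Y)\<close> by (rule sum.swap_restrict) simp
  also have "\<dots> = (\<Sum>d=1..M. moebius d * int (card ({a \<in> X. int d dvd a} \<times> {b \<in> Y. int d dvd b})))"
  proof (intro sum.cong refl)
    fix d
    have "{p. p \<in> X \<times> Y \<and> int d dvd fst p \<and> int d dvd snd p} = {a \<in> X. int d dvd a} \<times> {b \<in> Y. int d dvd b}"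
      by auto
    then show "(\<Sum>p | p \<in> X \<times> Y \<and> int d dvd fst p \<and> int d dvd snd p. moebius d)
        = moebius d * int (card ({a \<in> X. int d dvd a} \<times> {b \<in> Y. int d dvd b}))"
      by (simp add: mult.commute)
  qed
  finally show ?thesis
    by (simp add: card_cartesian_product)
qed

lemma abs_mult_minus_square_le:
  fixes x y u :: real
  assumes "\<bar>x - u\<bar> \<le> 1" "\<bar>y - u\<bar> \<le> 1" "0 \<le> u"
  shows "\<bar>x * y - u^2\<bar> \<le> 2 * u + 1"
proof -
  have "x * y - u^2 = (x - u) * y + u * (y - u)"
    by (simp add: algebra_simps power2_eq_square)
  also have "\<bar>\<dots>\<bar> \<le> \<bar>x - u\<bar> * \<bar>y\<bar> + u * \<bar>y - u\<bar>"
    using assms(3) abs_triangle_ineq by (simp add: abs_mult order_trans[OF abs_triangle_ineq])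
  also have "\<dots> \<le> 1 * (u + 1) + u * 1"
    using assms by (intro add_mono mult_mono) auto
  finally show ?thesis by simp
qed

definition coprime_pairs_in_square :: "nat \<Rightarrow> nat \<Rightarrow> nat \<Rightarrow> nat" where
  "coprime_pairs_in_square A B q = card {(a :: int, b :: int). a \<in> {int A .. int A + int q} \<and> b \<in> {int B .. int B + int q} \<and> coprime a b}"

lemma coprime_pairs_in_square_approx:
  fixes A B q :: nat
  assumes "A \<ge> 1" "B \<ge> 1"
  defines "M \<equiv> max A B + q"
  shows "\<bar>real (coprime_pairs_in_square A B q) - (real q + 1)^2 * (\<Sum>d=1..M. moebius d / (real d)^2)\<bar>
         \<le> 4 * (real q + 1) * sqrt M + M"
proof -
  define N where "N = real q + 1"
  define c where "c L d = real (card {a \<in> {int L .. int L + int q}. int d dvd a})" for L d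
  have count: "real (coprime_pairs_in_square A B q) = (\<Sum>d=1..M. moebius d * (c A d * c B d))"
    using arg_cong[OF card_coprime_pairs_eq_sum_moebius[of "{int A .. int A + int q}" M "{int B .. int B + int q}"],
        where f = real_of_int] assms
    by (simp add: coprime_pairs_in_square_def c_def)
  have approx: "\<bar>c L d - N / d\<bar> \<le> 1" if "d \<ge> 1" for L d
    using card_multiples_in_interval_approx[of "int d" "int L" "int L + int q"] that
    by (simp add: c_def N_def add.commute)
  have "\<bar>(\<Sum>d=1..M. moebius d * (c A d * c B d)) - N^2 * (\<Sum>d=1..M. moebius d / (real d)^2)\<bar>
      = \<bar>\<Sum>d=1..M. moebius d * (c A d * c B d - (N / d)^2)\<bar>"
    by (simp add: sum_distrib_left sum_subtractf algebra_simps power_divide)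
  also have "\<dots> \<le> (\<Sum>d=1..M. 2 * N * (1 / d) + 1)"
  proof (rule order_trans[OF sum_abs sum_mono])
    fix d assume "d \<in> {1..M}"
    then have "\<bar>c A d * c B d - (N / d)^2\<bar> \<le> 2 * (N / d) + 1"
      using approx by (intro abs_mult_minus_square_le) (auto simp: N_def)
    then have "\<bar>real_of_int (moebius d)\<bar> * \<bar>c A d * c B d - (N / d)^2\<bar> \<le> 1 * (2 * (N / d) + 1)"
      using abs_moebius_le_1[of d] by (intro mult_mono) auto
    then show "\<bar>moebius d * (c A d * c B d - (N / d)^2)\<bar> \<le> 2 * N * (1 / d) + 1"
      by (simp add: abs_mult)
  qed
  also have "\<dots> = 2 * N * harm M + M"
    by (simp add: harm_def sum.distrib sum_distrib_left divide_inverse)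
  also have "\<dots> \<le> 2 * N * (2 * sqrt M) + M"
    by (intro add_mono mult_left_mono harm_le_two_sqrt) (auto simp: N_def)
  finally show ?thesis
    unfolding count N_def by (simp add: algebra_simps)
qed

lemma coprime_pairs_in_square_density_bound:
  fixes A B q :: nat
  assumes "A \<ge> 1" "B \<ge> 1" "q \<ge> 1"
  defines "M \<equiv> real (max A B + q)"
  shows "\<bar>real (coprime_pairs_in_square A B q) / (real q)^2 - 6 / pi^2\<bar>
         \<le> 8 * sqrt M / q + M / (real q)^2 + 16 / sqrt M + 3 / q"
proof -
  define C where "C = real (coprime_pairs_in_square A B q)"
  define S where "S = (\<Sum>d=1..max A B + q. moebius d / (real d)^2)"
  define N K where "N = real q + 1" and "K = 6 / pi^2"
  have "M \<ge> 1" "q \<ge> 1" using assms by (simp_all add: M_def)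
  have main: "\<bar>C - N^2 * S\<bar> \<le> 4 * N * sqrt M + M"
    using coprime_pairs_in_square_approx[OF assms(1,2), of q] by (simp add: C_def S_def N_def M_def)
  have zeta: "\<bar>S - K\<bar> \<le> 4 / sqrt M"
    using moebius_inverse_squares_error[of "max A B + q"] assms by (simp add: S_def K_def M_def)
  have "0 \<le> K" "K \<le> 1"
    using mult_strict_mono[OF pi_gt3 pi_gt3] by (simp_all add: K_def power2_eq_square)
  have "N \<le> 2 * q"
    using \<open>q \<ge> 1\<close> by (simp add: N_def)
  then have "N^2 \<le> 4 * q^2"
    using power_mono[of N "2 * q" 2] by (simp add: N_def power_mult_distrib)
  have "N^2 - q^2 = 2 * q + 1"
    by (simp add: N_def power2_eq_square algebra_simps)
  then have "q^2 \<le> N^2" "(N^2 - q^2) * K \<le> 2 * q + 1"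
    using \<open>0 \<le> K\<close> \<open>K \<le> 1\<close> by (simp_all add: mult_left_le)
  have decomp: "C - q^2 * K = (C - N^2 * S) + N^2 * (S - K) + (N^2 - q^2) * K"
    by (simp add: algebra_simps)
  have "\<bar>C - q^2 * K\<bar> \<le> \<bar>C - N^2 * S\<bar> + \<bar>N^2 * (S - K)\<bar> + \<bar>(N^2 - q^2) * K\<bar>"
    unfolding decomp using abs_triangle_ineq[of "C - N^2 * S + N^2 * (S - K)" "(N^2 - q^2) * K"]
      abs_triangle_ineq[of "C - N^2 * S" "N^2 * (S - K)"] by linarith
  also have "\<dots> = \<bar>C - N^2 * S\<bar> + N^2 * \<bar>S - K\<bar> + (N^2 - q^2) * K"
    using \<open>0 \<le> K\<close> \<open>q^2 \<le> N^2\<close> by (simp add: abs_mult)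
  also have "\<dots> \<le> (4 * N * sqrt M + M) + N^2 * (4 / sqrt M) + (2 * q + 1)"
    using main zeta \<open>(N^2 - q^2) * K \<le> 2 * q + 1\<close> by (intro add_mono mult_left_mono) auto
  also have "\<dots> \<le> (4 * (2 * q) * sqrt M + M) + (4 * q^2) * (4 / sqrt M) + 3 * q"
    using \<open>N \<le> 2 * q\<close> \<open>N^2 \<le> 4 * q^2\<close> \<open>q \<ge> 1\<close> \<open>M \<ge> 1\<close>
    by (intro add_mono mult_right_mono mult_left_mono) auto
  also have "\<dots> = q^2 * (8 * sqrt M / q + M / (real q)^2 + 16 / sqrt M + 3 / q)"
    using \<open>q \<ge> 1\<close> by (simp add: field_simps power2_eq_square)
  finally have "\<bar>C - q^2 * K\<bar> / q^2 \<le> 8 * sqrt M / q + M / (real q)^2 + 16 / sqrt M + 3 / q"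
    using \<open>q \<ge> 1\<close> by (simp add: divide_le_eq mult.commute)
  moreover have "C / q^2 - K = (C - q^2 * K) / q^2"
    using \<open>q \<ge> 1\<close> by (simp add: field_simps)
  ultimately show ?thesis
    by (simp add: C_def K_def)
qed

lemma density_error_terms_le:
  fixes q M \<eta> :: real
  assumes "0 < q" "q \<le> M" "M \<le> \<eta> * q^2" "1 / q \<le> \<eta>" "\<eta> \<le> 1"
  shows "8 * sqrt M / q + M / q^2 + 16 / sqrt M + 3 / q \<le> 28 * sqrt \<eta>"
proof -
  have "0 < 1 / q"
    using assms(1) by simp
  then have "0 < \<eta>"
    using assms(4) by linarith
  then have "\<eta> \<le> sqrt \<eta>"
    using assms(5) by (intro real_le_rsqrt) (simp add: power2_eq_square mult_left_le)
  have "sqrt M \<le> sqrt \<eta> * q"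
    using assms(1,3) real_sqrt_le_mono[OF assms(3)] by (simp add: real_sqrt_mult)
  then have "8 * sqrt M / q \<le> 8 * sqrt \<eta>"
    using assms(1) by (simp add: divide_le_eq)
  moreover have "M / q^2 \<le> sqrt \<eta>"
  proof -
    have "M / q^2 \<le> \<eta>"
      using assms(1,3) by (simp add: divide_le_eq)
    then show ?thesis
      using \<open>\<eta> \<le> sqrt \<eta>\<close> by linarith
  qed
  moreover have "1 / sqrt M \<le> sqrt \<eta>"
  proof -
    have "1 / sqrt M \<le> 1 / sqrt q"
      using assms(1,2) by (intro divide_left_mono) auto
    also have "\<dots> = sqrt (1 / q)"
      by (simp add: real_sqrt_divide)
    also have "\<dots> \<le> sqrt \<eta>"
      using assms(4) by simp
    finally show ?thesis .
  qed
  moreover have "3 / q \<le> 3 * sqrt \<eta>"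
    using assms(4) \<open>\<eta> \<le> sqrt \<eta>\<close> by simp
  ultimately show ?thesis
    by simp
qed

lemma coprime_pairs_in_square_density_le_sqrt:
  fixes q q1 q2 :: nat and \<eta> :: real
  assumes "0 < \<eta>" "\<eta> \<le> 1" "2 / \<eta> \<le> q" "0 < q1" "0 < q2" "real (max q1 q2) \<le> \<eta> / 2 * (real q)^2"
  shows "\<bar>real (coprime_pairs_in_square q1 q2 q) / (real q)^2 - 6 / pi^2\<bar> \<le> 28 * sqrt \<eta>"
proof -
  have "0 < q"
    using assms(1,3) by (metis divide_pos_pos of_nat_0_less_iff order_less_le_trans zero_less_numeral)
  have "1 / q \<le> \<eta> / 2" and "q \<le> \<eta> / 2 * q^2"
    using assms(1,3) \<open>0 < q\<close> by (simp_all add: field_simps power2_eq_square)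
  then have "real (max q1 q2 + q) \<le> \<eta> * q^2" "1 / q \<le> \<eta>"
    using assms(1,6) by simp_all
  then show ?thesis
    using order_trans[OF coprime_pairs_in_square_density_bound density_error_terms_le] assms \<open>0 < q\<close>
    by simp
qed

theorem lemma2:
  shows "\<forall>\<epsilon>>0. \<exists>\<delta>>0. \<exists>Q::nat. \<forall>q q1 q2 :: nat.
     q \<ge> Q \<and> q > 0 \<and> q1 > 0 \<and> q2 > 0 \<and> real (max q1 q2) \<le> \<delta> * (real q)^2 \<longrightarrow>
     \<bar>real (card {(a :: int, b :: int). a \<in> {int q1 .. int q1 + int q} \<and> b \<in> {int q2 .. int q2 + int q} \<and> coprime a b})
        / (real q)^2 - 6 / pi^2\<bar> \<le> \<epsilon>"
proof (intro allI impI)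
  fix \<epsilon> :: real
  assume "\<epsilon> > 0"
  define \<eta> where "\<eta> = min 1 ((\<epsilon> / 28)^2)"
  have "0 < \<eta>" "\<eta> \<le> 1" "28 * sqrt \<eta> \<le> \<epsilon>"
    using \<open>\<epsilon> > 0\<close> real_sqrt_le_mono[of \<eta> "(\<epsilon> / 28)^2"] by (auto simp: \<eta>_def)
  have "\<bar>real (coprime_pairs_in_square q1 q2 q) / (real q)^2 - 6 / pi^2\<bar> \<le> \<epsilon>"
    if "2 / \<eta> \<le> q" "0 < q1" "0 < q2" "real (max q1 q2) \<le> \<eta> / 2 * (real q)^2" for q q1 q2
    using coprime_pairs_in_square_density_le_sqrt[OF \<open>0 < \<eta>\<close> \<open>\<eta> \<le> 1\<close> that]
      \<open>28 * sqrt \<eta> \<le> \<epsilon>\<close> by linarith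
  then show "\<exists>\<delta>>0. \<exists>Q::nat. \<forall>q q1 q2 :: nat.
     q \<ge> Q \<and> q > 0 \<and> q1 > 0 \<and> q2 > 0 \<and> real (max q1 q2) \<le> \<delta> * (real q)^2 \<longrightarrow>
     \<bar>real (card {(a :: int, b :: int). a \<in> {int q1 .. int q1 + int q} \<and> b \<in> {int q2 .. int q2 + int q} \<and> coprime a b}) / (real q)^2 - 6 / pi^2\<bar> \<le> \<epsilon>"
    using \<open>0 < \<eta>\<close> unfolding coprime_pairs_in_square_def
    by (intro exI[of _ "\<eta> / 2"] conjI exI[of _ "nat \<lceil>2 / \<eta>\<rceil>"]) auto
qed

end
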